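(* Let $\mathcal C$ and $\mathcal D$ be $\Bbbk$-linear categories, let $F:\mathcal C\to\mathcal D$ be a fully faithful ($\Bbbk$-linear) functor, and let $\sigma_{\mathcal C}$ and $\sigma_{\mathcal D}$ be ($\Bbbk$-linear) endofunctors of $\mathcal C$ and $\mathcal D$ respectively. Suppose that $F\circ\sigma_{\mathcal C}$ is naturally isomorphic to $\sigma_{\mathcal D}\circ F$. Then $\mathrm{FP}(u,t,\sigma_{\mathcal C})\le \mathrm{FP}(u,t,\sigma_{\mathcal D})$ coefficientwise, i.e. $\mathrm{fpdim}^n(\sigma_{\mathcal C}^m)\le \mathrm{fpdim}^n(\sigma_{\mathcal D}^m)$ for all $n\ge 1$ and $m\ge 0$.
   Context: $\Bbbk$ is an algebraically closed field. For objects $X,Y$ write $\dim(X,Y)=\dim_\Bbbk\mathrm{Hom}(X,Y)\in\mathbb{Z}_{\ge0}\cup\{\infty\}$. Spectral radius: for a square matrix $A$ with entries in $\mathbb R\cup\{\pm\infty\}$, let $A'$ be obtained by replacing each entry $\infty$ (resp. $-\infty$) in position $(i,j)$ by a real variable $x_{ij}$ (resp. $-x_{ij}$), and set $\rho(A)=\liminf_{\text{all }x_{ij}\to\infty}\rho(A')$, where for a real matrix $\rho$ is the maximum of the absolute values of its eigenvalues. A brick is an object $M$ with $\mathrm{Hom}(M,M)=\Bbbk$. A brick set of size $n$ is a set $\phi=\{X_1,\dots,X_n\}$ of nonzero bricks with $\dim(X_i,X_j)=\delta_{ij}$ for all $i,j$; $\Phi_{n,b}$ denotes the set of brick sets of size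 $n$. For an endofunctor $\sigma$, the adjacency matrix is $A(\phi,\sigma)=(\dim(X_i,\sigma(X_j)))_{n\times n}$, and $\mathrm{fpdim}^n(\sigma)=\sup_{\phi\in\Phi_{n,b}}\rho(A(\phi,\sigma))$ (defined as $0$ if $\Phi_{n,b}=\emptyset$). The Frobenius–Perron series is $\mathrm{FP}(u,t,\sigma)=\sum_{m\ge0}\sum_{n\ge1}\mathrm{fpdim}^n(\sigma^m)t^mu^n$, and for two such series $f\le g$ means every coefficient of $f$ is at most the corresponding coefficient of $g$ (coefficients in $\mathbb R_{\ge0}\cup\{\infty\}$). *)

theory Defs
  imports Complex_Main "HOL-Library.Extended_Nat" "HOL-Library.Extended_Real"
    "HOL-Library.Liminf_Limsup" "HOL-Computational_Algebra.Polynomial"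
begin

definition alg_closed :: "'k::field itself \<Rightarrow> bool" where
  "alg_closed _ \<longleftrightarrow> (\<forall>p :: 'k poly. degree p > 0 \<longrightarrow> (\<exists>x. poly p x = 0))"

definition kdim :: "('k::field \<Rightarrow> 'm::ab_group_add \<Rightarrow> 'm) \<Rightarrow> 'm set \<Rightarrow> enat" where
  "kdim sc S = (if \<exists>B. finite B \<and> module.span sc B = S
                then enat (vector_space.dim sc S) else \<infinity>)"

text \<open>Objects: all elements of type 'o. Hom X Y is a k-subspace of the ambient
  k-vector space 'm; composition cmp X Y Z g f : Hom X Y -> Hom Y Z -> Hom X Z
  (g after f); idm X is the identity of X.\<close>

definition klin_cat ::
  "('k::field \<Rightarrow> 'm::ab_group_add \<Rightarrow> 'm) \<Rightarrow> ('o \<Rightarrow> 'o \<Rightarrow> 'm set)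
   \<Rightarrow> ('o \<Rightarrow> 'o \<Rightarrow> 'o \<Rightarrow> 'm \<Rightarrow> 'm \<Rightarrow> 'm) \<Rightarrow> ('o \<Rightarrow> 'm) \<Rightarrow> bool" where
  "klin_cat sc Hom cmp idm \<longleftrightarrow>
     vector_space sc \<and>
     (\<forall>X Y. module.subspace sc (Hom X Y)) \<and>
     (\<forall>X Y Z f g. f \<in> Hom X Y \<longrightarrow> g \<in> Hom Y Z \<longrightarrow> cmp X Y Z g f \<in> Hom X Z) \<and>
     (\<forall>X. idm X \<in> Hom X X) \<and>
     (\<forall>X Y f. f \<in> Hom X Y \<longrightarrow> cmp X Y Y (idm Y) f = f \<and> cmp X X Y f (idm X) = f) \<and>
     (\<forall>W X Y Z f g h. f \<in> Hom W X \<longrightarrow> g \<in> Hom X Y \<longrightarrow> h \<in> Hom Y Z \<longrightarrow>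
        cmp W Y Z h (cmp W X Y g f) = cmp W X Z (cmp X Y Z h g) f) \<and>
     (\<forall>X Y Z f1 f2 g c. f1 \<in> Hom X Y \<longrightarrow> f2 \<in> Hom X Y \<longrightarrow> g \<in> Hom Y Z \<longrightarrow>
        cmp X Y Z g (f1 + f2) = cmp X Y Z g f1 + cmp X Y Z g f2 \<and>
        cmp X Y Z g (sc c f1) = sc c (cmp X Y Z g f1)) \<and>
     (\<forall>X Y Z f g1 g2 c. f \<in> Hom X Y \<longrightarrow> g1 \<in> Hom Y Z \<longrightarrow> g2 \<in> Hom Y Z \<longrightarrow>
        cmp X Y Z (g1 + g2) f = cmp X Y Z g1 f + cmp X Y Z g2 f \<and>
        cmp X Y Z (sc c g1) f = sc c (cmp X Y Z g1 f))"

definition klin_functor ::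
  "('k::field \<Rightarrow> 'm1::ab_group_add \<Rightarrow> 'm1) \<Rightarrow> ('o1 \<Rightarrow> 'o1 \<Rightarrow> 'm1 set)
   \<Rightarrow> ('o1 \<Rightarrow> 'o1 \<Rightarrow> 'o1 \<Rightarrow> 'm1 \<Rightarrow> 'm1 \<Rightarrow> 'm1) \<Rightarrow> ('o1 \<Rightarrow> 'm1)
   \<Rightarrow> ('k \<Rightarrow> 'm2::ab_group_add \<Rightarrow> 'm2) \<Rightarrow> ('o2 \<Rightarrow> 'o2 \<Rightarrow> 'm2 set)
   \<Rightarrow> ('o2 \<Rightarrow> 'o2 \<Rightarrow> 'o2 \<Rightarrow> 'm2 \<Rightarrow> 'm2 \<Rightarrow> 'm2) \<Rightarrow> ('o2 \<Rightarrow> 'm2)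
   \<Rightarrow> ('o1 \<Rightarrow> 'o2) \<Rightarrow> ('o1 \<Rightarrow> 'o1 \<Rightarrow> 'm1 \<Rightarrow> 'm2) \<Rightarrow> bool" where
  "klin_functor sc1 Hom1 cmp1 id1 sc2 Hom2 cmp2 id2 Fo Fm \<longleftrightarrow>
     (\<forall>X Y f. f \<in> Hom1 X Y \<longrightarrow> Fm X Y f \<in> Hom2 (Fo X) (Fo Y)) \<and>
     (\<forall>X. Fm X X (id1 X) = id2 (Fo X)) \<and>
     (\<forall>X Y Z f g. f \<in> Hom1 X Y \<longrightarrow> g \<in> Hom1 Y Z \<longrightarrow>
        Fm X Z (cmp1 X Y Z g f) = cmp2 (Fo X) (Fo Y) (Fo Z) (Fm Y Z g) (Fm X Y f)) \<and>
     (\<forall>X Y f g c. f \<in> Hom1 X Y \<longrightarrow> g \<in> Hom1 X Y \<longrightarrow>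
        Fm X Y (f + g) = Fm X Y f + Fm X Y g \<and> Fm X Y (sc1 c f) = sc2 c (Fm X Y f))"

definition fully_faithful ::
  "('o1 \<Rightarrow> 'o1 \<Rightarrow> 'm1 set) \<Rightarrow> ('o2 \<Rightarrow> 'o2 \<Rightarrow> 'm2 set)
   \<Rightarrow> ('o1 \<Rightarrow> 'o2) \<Rightarrow> ('o1 \<Rightarrow> 'o1 \<Rightarrow> 'm1 \<Rightarrow> 'm2) \<Rightarrow> bool" where
  "fully_faithful Hom1 Hom2 Fo Fm \<longleftrightarrow>
     (\<forall>X Y. bij_betw (Fm X Y) (Hom1 X Y) (Hom2 (Fo X) (Fo Y)))"

definition nat_iso ::
  "('o1 \<Rightarrow> 'o1 \<Rightarrow> 'm1 set)
   \<Rightarrow> ('o2 \<Rightarrow> 'o2 \<Rightarrow> 'm2 set) \<Rightarrow> ('o2 \<Rightarrow> 'o2 \<Rightarrow> 'o2 \<Rightarrow> 'm2 \<Rightarrow> 'm2 \<Rightarrow> 'm2) \<Rightarrow> ('o2 \<Rightarrow> 'm2)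
   \<Rightarrow> ('o1 \<Rightarrow> 'o2) \<Rightarrow> ('o1 \<Rightarrow> 'o1 \<Rightarrow> 'm1 \<Rightarrow> 'm2)
   \<Rightarrow> ('o1 \<Rightarrow> 'o2) \<Rightarrow> ('o1 \<Rightarrow> 'o1 \<Rightarrow> 'm1 \<Rightarrow> 'm2) \<Rightarrow> bool" where
  "nat_iso Hom1 Hom2 cmp2 id2 Go Gm Ho Hm \<longleftrightarrow>
     (\<exists>\<eta>. (\<forall>X. \<eta> X \<in> Hom2 (Go X) (Ho X) \<and>
              (\<exists>\<theta> \<in> Hom2 (Ho X) (Go X).
                 cmp2 (Go X) (Ho X) (Go X) \<theta> (\<eta> X) = id2 (Go X) \<and>
                 cmp2 (Ho X) (Go X) (Ho X) (\<eta> X) \<theta> = id2 (Ho X))) \<and>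
          (\<forall>X Y f. f \<in> Hom1 X Y \<longrightarrow>
              cmp2 (Go X) (Go Y) (Ho Y) (\<eta> Y) (Gm X Y f) =
              cmp2 (Go X) (Ho X) (Ho Y) (Hm X Y f) (\<eta> X)))"

definition spec_rad :: "'i set \<Rightarrow> ('i \<Rightarrow> 'i \<Rightarrow> real) \<Rightarrow> real" where
  "spec_rad I M = Max {cmod c | c. \<exists>v :: 'i \<Rightarrow> complex. (\<exists>i\<in>I. v i \<noteq> 0) \<and>
      (\<forall>i\<in>I. (\<Sum>j\<in>I. complex_of_real (M i j) * v j) = c * v i)}"

text \<open>Spectral radius of a matrix with entries in N \<union> {\<infinity>}: replace every \<infinity> entry
  in position (i,j) by a real variable x i j and take the liminf as all these
  variables tend to \<infinity>.\<close>

definition spec_rad_inf :: "'i set \<Rightarrow> ('i \<Rightarrow> 'i \<Rightarrow> enat) \<Rightarrow> ereal" where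
  "spec_rad_inf I A =
     Liminf (INF p \<in> {p \<in> I \<times> I. A (fst p) (snd p) = \<infinity>}.
               filtercomap (\<lambda>x :: 'i \<Rightarrow> 'i \<Rightarrow> real. x (fst p) (snd p)) at_top)
       (\<lambda>x. ereal (spec_rad I (\<lambda>i j. if A i j = \<infinity> then x i j else real (the_enat (A i j)))))"

definition hdim :: "('k::field \<Rightarrow> 'm::ab_group_add \<Rightarrow> 'm) \<Rightarrow> ('o \<Rightarrow> 'o \<Rightarrow> 'm set) \<Rightarrow> 'o \<Rightarrow> 'o \<Rightarrow> enat" where
  "hdim sc Hom X Y = kdim sc (Hom X Y)"

definition nonzero_brick :: "('k::field \<Rightarrow> 'm::ab_group_add \<Rightarrow> 'm) \<Rightarrow> ('o \<Rightarrow> 'o \<Rightarrow> 'm set) \<Rightarrow> ('o \<Rightarrow> 'm) \<Rightarrow> 'o \<Rightarrow> bool" where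
  "nonzero_brick sc Hom idm X \<longleftrightarrow> idm X \<noteq> 0 \<and> Hom X X = range (\<lambda>c. sc c (idm X))"

definition brick_set :: "('k::field \<Rightarrow> 'm::ab_group_add \<Rightarrow> 'm) \<Rightarrow> ('o \<Rightarrow> 'o \<Rightarrow> 'm set) \<Rightarrow> ('o \<Rightarrow> 'm) \<Rightarrow> nat \<Rightarrow> 'o set \<Rightarrow> bool" where
  "brick_set sc Hom idm n \<phi> \<longleftrightarrow> finite \<phi> \<and> card \<phi> = n \<and>
     (\<forall>X\<in>\<phi>. nonzero_brick sc Hom idm X) \<and>
     (\<forall>X\<in>\<phi>. \<forall>Y\<in>\<phi>. hdim sc Hom X Y = (if X = Y then 1 else 0))"

definition adj_matrix :: "('k::field \<Rightarrow> 'm::ab_group_add \<Rightarrow> 'm) \<Rightarrow> ('o \<Rightarrow> 'o \<Rightarrow> 'm set) \<Rightarrow> ('o \<Rightarrow> 'o) \<Rightarrow> 'o \<Rightarrow> 'o \<Rightarrow> enat" where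
  "adj_matrix sc Hom So X Y = hdim sc Hom X (So Y)"

definition fpdim :: "('k::field \<Rightarrow> 'm::ab_group_add \<Rightarrow> 'm) \<Rightarrow> ('o \<Rightarrow> 'o \<Rightarrow> 'm set) \<Rightarrow> ('o \<Rightarrow> 'm) \<Rightarrow> nat \<Rightarrow> ('o \<Rightarrow> 'o) \<Rightarrow> ereal" where
  "fpdim sc Hom idm n So =
     (if {\<phi>. brick_set sc Hom idm n \<phi>} = {} then 0
      else (SUP \<phi> \<in> {\<phi>. brick_set sc Hom idm n \<phi>}. spec_rad_inf \<phi> (adj_matrix sc Hom So)))"

end

theory Submission
  imports Defs "Jordan_Normal_Form.Spectral_Radius"
begin

text \<open>A fully faithful linear functor \<open>F\<close> identifies every Hom space of \<open>\<C>\<close> with the corresponding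
  Hom space of \<open>\<D>\<close>, so it sends bricks to bricks and brick sets injectively to brick sets.
  The natural isomorphism \<open>F \<sigma>\<^sub>\<C> \<cong> \<sigma>\<^sub>\<D> F\<close> iterates to \<open>F \<sigma>\<^sub>\<C>\<^sup>m \<cong> \<sigma>\<^sub>\<D>\<^sup>m F\<close>, and since Hom dimensions are
  invariant under isomorphism, the adjacency matrix of \<open>\<sigma>\<^sub>\<C>\<^sup>m\<close> on a brick set \<open>\<phi>\<close> coincides with the
  adjacency matrix of \<open>\<sigma>\<^sub>\<D>\<^sup>m\<close> on \<open>F \<phi>\<close>. Hence every spectral radius entering the supremum defining
  \<open>fpdim\<^sup>n(\<sigma>\<^sub>\<C>\<^sup>m)\<close> also enters the one defining \<open>fpdim\<^sup>n(\<sigma>\<^sub>\<D>\<^sup>m)\<close>.\<close>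

definition eigenvalues_on :: "'i set \<Rightarrow> ('i \<Rightarrow> 'i \<Rightarrow> real) \<Rightarrow> complex set" where
  "eigenvalues_on I M = {c. \<exists>v :: 'i \<Rightarrow> complex. (\<exists>i\<in>I. v i \<noteq> 0) \<and>
      (\<forall>i\<in>I. (\<Sum>j\<in>I. complex_of_real (M i j) * v j) = c * v i)}"

lemma spec_rad_eq_Max_eigenvalues_on: "spec_rad I M = Max (cmod ` eigenvalues_on I M)"
  unfolding spec_rad_def eigenvalues_on_def by (rule arg_cong[where f = Max]) auto

lemma eigenvalues_on_reindex:
  fixes M :: "'i \<Rightarrow> 'i \<Rightarrow> real" and N :: "'j \<Rightarrow> 'j \<Rightarrow> real"
  assumes inj: "inj_on h I" and NM: "\<And>i j. i \<in> I \<Longrightarrow> j \<in> I \<Longrightarrow> N (h i) (h j) = M i j"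
  shows "eigenvalues_on (h ` I) N = eigenvalues_on I M"
proof (intro equalityI subsetI)
  have sum_h: "(\<Sum>j\<in>h ` I. complex_of_real (N (h i) j) * w j) =
      (\<Sum>j\<in>I. complex_of_real (M i j) * w (h j))" if "i \<in> I" for i and w :: "'j \<Rightarrow> complex"
    using that NM by (simp add: sum.reindex[OF inj])
  fix c
  assume "c \<in> eigenvalues_on (h ` I) N"
  then obtain v where nz: "\<exists>i\<in>h ` I. v i \<noteq> 0"
    and ev: "\<forall>i\<in>h ` I. (\<Sum>j\<in>h ` I. complex_of_real (N i j) * v j) = c * v i"
    unfolding eigenvalues_on_def by blast
  show "c \<in> eigenvalues_on I M"
    unfolding eigenvalues_on_def using nz ev sum_h by (intro CollectI exI[of _ "v \<circ> h"]) auto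
next
  let ?g = "the_inv_into I h"
  have gh: "\<And>i. i \<in> I \<Longrightarrow> ?g (h i) = i" using inj by (simp add: the_inv_into_f_f)
  fix c
  assume "c \<in> eigenvalues_on I M"
  then obtain v where nz: "\<exists>i\<in>I. v i \<noteq> 0"
    and ev: "\<forall>i\<in>I. (\<Sum>j\<in>I. complex_of_real (M i j) * v j) = c * v i"
    unfolding eigenvalues_on_def by blast
  have "(\<Sum>j\<in>h ` I. complex_of_real (N (h i) j) * v (?g j)) = c * v (?g (h i))" if "i \<in> I" for i
    using that ev NM gh by (simp add: sum.reindex[OF inj])
  then show "c \<in> eigenvalues_on (h ` I) N"
    unfolding eigenvalues_on_def using nz gh by (intro CollectI exI[of _ "v \<circ> ?g"]) force
qed

lemma eigenvalues_on_atLeastLessThan: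
  "eigenvalues_on {0..<n} M = spectrum (mat n n (\<lambda>(i, j). complex_of_real (M i j)))"
  (is "_ = spectrum ?A")
proof (intro equalityI subsetI)
  fix c
  assume "c \<in> eigenvalues_on {0..<n} M"
  then obtain v where nz: "\<exists>i\<in>{0..<n}. v i \<noteq> 0"
    and ev: "\<forall>i\<in>{0..<n}. (\<Sum>j\<in>{0..<n}. complex_of_real (M i j) * v j) = c * v i"
    unfolding eigenvalues_on_def by blast
  have "?A *\<^sub>v vec n v = c \<cdot>\<^sub>v vec n v"
    using ev by (intro eq_vecI) (auto simp: scalar_prod_def)
  moreover have "vec n v \<noteq> 0\<^sub>v n" using nz by (metis atLeastLessThan_iff index_vec index_zero_vec(1))
  ultimately show "c \<in> spectrum ?A"
    unfolding spectrum_def eigenvalue_def eigenvector_def by (auto intro!: exI[of _ "vec n v"])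
next
  fix c
  assume "c \<in> spectrum ?A"
  then obtain w where w: "w \<in> carrier_vec n" and nz: "w \<noteq> 0\<^sub>v n" and ev: "?A *\<^sub>v w = c \<cdot>\<^sub>v w"
    unfolding spectrum_def eigenvalue_def eigenvector_def by auto
  have "\<exists>i<n. w $ i \<noteq> 0" using w nz by (metis carrier_vecD eq_vecI index_zero_vec)
  moreover have "(\<Sum>j\<in>{0..<n}. complex_of_real (M i j) * w $ j) = c * w $ i" if "i < n" for i
    using that w arg_cong[OF ev, of "\<lambda>u. u $ i"] by (simp add: scalar_prod_def)
  ultimately show "c \<in> eigenvalues_on {0..<n} M"
    unfolding eigenvalues_on_def by (intro CollectI exI[of _ "\<lambda>i. w $ i"]) auto
qed

lemma eigenvalues_on_finite_nonempty:
  assumes "finite I" "I \<noteq> {}"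
  shows "finite (eigenvalues_on I M)" "eigenvalues_on I M \<noteq> {}"
proof -
  define n where "n = card I"
  obtain e where e: "bij_betw e {0..<n} I"
    using ex_bij_betw_nat_finite[OF \<open>finite I\<close>] n_def by blast
  define A where "A = mat n n (\<lambda>(a, b). complex_of_real (M (e a) (e b)))"
  have A: "A \<in> carrier_mat n n" unfolding A_def by simp
  have "eigenvalues_on I M = eigenvalues_on (e ` {0..<n}) M"
    using e by (simp add: bij_betw_def)
  also have "\<dots> = eigenvalues_on {0..<n} (\<lambda>a b. M (e a) (e b))"
    using e by (intro eigenvalues_on_reindex) (simp_all add: bij_betw_def)
  also have "\<dots> = spectrum A"
    unfolding A_def by (rule eigenvalues_on_atLeastLessThan)
  finally have eq: "eigenvalues_on I M = spectrum A" .
  have "n > 0" using assms n_def by (simp add: card_gt_0_iff)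
  then show "finite (eigenvalues_on I M)" "eigenvalues_on I M \<noteq> {}"
    unfolding eq using card_finite_spectrum(1)[OF A] spectrum_non_empty[OF A] by auto
qed

lemma spec_rad_nonneg:
  assumes "finite I" "I \<noteq> {}"
  shows "0 \<le> spec_rad I M"
proof -
  from eigenvalues_on_finite_nonempty[OF assms] obtain c where
    fin: "finite (eigenvalues_on I M)" and c: "c \<in> eigenvalues_on I M" by blast
  have "0 \<le> cmod c" by simp
  also have "\<dots> \<le> Max (cmod ` eigenvalues_on I M)" using fin c by simp
  finally show ?thesis unfolding spec_rad_eq_Max_eigenvalues_on .
qed

lemma spec_rad_reindex:
  fixes M :: "'i \<Rightarrow> 'i \<Rightarrow> real" and N :: "'j \<Rightarrow> 'j \<Rightarrow> real"
  assumes "inj_on h I" "\<And>i j. i \<in> I \<Longrightarrow> j \<in> I \<Longrightarrow> N (h i) (h j) = M i j"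
  shows "spec_rad (h ` I) N = spec_rad I M"
  using eigenvalues_on_reindex[of h I N M] assms by (simp add: spec_rad_eq_Max_eigenvalues_on)

lemma spec_rad_inf_nonneg:
  assumes "finite I" "I \<noteq> {}"
  shows "0 \<le> spec_rad_inf I A"
  unfolding spec_rad_inf_def
  by (rule Liminf_bounded) (use spec_rad_nonneg[OF assms] in auto)

lemma Liminf_filter_antimono:
  assumes "F' \<le> F" shows "Liminf F f \<le> Liminf F' f"
  unfolding Liminf_def using assms by (auto intro!: SUP_mono dest: filter_leD)

text \<open>Only an inequality holds: the matrix on \<open>h ` I\<close> has its own variables \<open>x (h i) (h j)\<close>, and
  substituting them is a map of filters in one direction only.\<close>

lemma spec_rad_inf_reindex_le:
  fixes A :: "'i \<Rightarrow> 'i \<Rightarrow> enat" and B :: "'j \<Rightarrow> 'j \<Rightarrow> enat"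
  assumes inj: "inj_on h I" and BA: "\<And>i j. i \<in> I \<Longrightarrow> j \<in> I \<Longrightarrow> B (h i) (h j) = A i j"
  shows "spec_rad_inf I A \<le> spec_rad_inf (h ` I) B"
proof -
  define T where "T = (\<lambda>(x :: 'j \<Rightarrow> 'j \<Rightarrow> real) i j. x (h i) (h j))"
  define f where "f = (\<lambda>x. ereal (spec_rad I (\<lambda>i j. if A i j = \<infinity> then x i j else real (the_enat (A i j)))))"
  define g where "g = (\<lambda>x. ereal (spec_rad (h ` I) (\<lambda>i j. if B i j = \<infinity> then x i j else real (the_enat (B i j)))))"
  define F where "F = (INF p \<in> {p \<in> I \<times> I. A (fst p) (snd p) = \<infinity>}.
               filtercomap (\<lambda>x :: 'i \<Rightarrow> 'i \<Rightarrow> real. x (fst p) (snd p)) at_top)"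
  define G where "G = (INF p \<in> {p \<in> h ` I \<times> h ` I. B (fst p) (snd p) = \<infinity>}.
               filtercomap (\<lambda>x :: 'j \<Rightarrow> 'j \<Rightarrow> real. x (fst p) (snd p)) at_top)"
  have gf: "g x = f (T x)" for x
    unfolding g_def f_def T_def by (subst spec_rad_reindex[OF inj]) (auto simp: BA)
  have le: "filtermap T G \<le> F"
    unfolding F_def
  proof (rule INF_greatest)
    fix p assume p: "p \<in> {p \<in> I \<times> I. A (fst p) (snd p) = \<infinity>}"
    let ?q = "(h (fst p), h (snd p))"
    have q: "?q \<in> {p \<in> h ` I \<times> h ` I. B (fst p) (snd p) = \<infinity>}" using p BA by auto
    have "G \<le> filtercomap (\<lambda>x :: 'j \<Rightarrow> 'j \<Rightarrow> real. x (fst ?q) (snd ?q)) at_top"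
      unfolding G_def by (rule INF_lower[OF q])
    then have "filtermap (\<lambda>x. x (fst p) (snd p)) (filtermap T G) \<le> at_top"
      by (simp add: filtermap_filtermap T_def filtermap_le_iff_le_filtercomap)
    then show "filtermap T G \<le> filtercomap (\<lambda>x. x (fst p) (snd p)) at_top"
      by (simp add: filtermap_le_iff_le_filtercomap)
  qed
  have "spec_rad_inf I A = Liminf F f" unfolding spec_rad_inf_def F_def f_def ..
  also have "\<dots> \<le> Liminf (filtermap T G) f" by (rule Liminf_filter_antimono[OF le])
  also have "\<dots> \<le> Liminf G (\<lambda>x. f (T x))" by (rule Liminf_filtermap_le)
  also have "\<dots> = spec_rad_inf (h ` I) B" unfolding spec_rad_inf_def G_def gf[symmetric] g_def ..
  finally show ?thesis .
qed

locale linear_bij_on =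
  v1: vector_space s1 + v2: vector_space s2
  for s1 :: "'k::field \<Rightarrow> 'a::ab_group_add \<Rightarrow> 'a" and s2 :: "'k \<Rightarrow> 'b::ab_group_add \<Rightarrow> 'b" +
  fixes f :: "'a \<Rightarrow> 'b" and S :: "'a set" and T :: "'b set"
  assumes subspace: "v1.subspace S"
    and map_add: "\<And>x y. x \<in> S \<Longrightarrow> y \<in> S \<Longrightarrow> f (x + y) = f x + f y"
    and map_scale: "\<And>c x. x \<in> S \<Longrightarrow> f (s1 c x) = s2 c (f x)"
    and bij: "bij_betw f S T"
begin

lemma shows inj: "inj_on f S" and image_eq: "f ` S = T"
  using bij by (auto simp: bij_betw_def)

lemma map_zero: "f 0 = 0"
proof -
  have "f (0 + 0) = f 0 + f 0" using map_add v1.subspace_0[OF subspace] by blast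
  then show ?thesis by simp
qed

lemma lincomb_in: "B \<subseteq> S \<Longrightarrow> (\<Sum>v\<in>B. s1 (u v) v) \<in> S"
  by (auto intro!: v1.subspace_sum[OF subspace] v1.subspace_scale[OF subspace])

lemma map_lincomb:
  assumes "finite B" "B \<subseteq> S"
  shows "f (\<Sum>v\<in>B. s1 (u v) v) = (\<Sum>v\<in>B. s2 (u v) (f v))"
  using assms
proof (induction B rule: finite_induct)
  case empty
  then show ?case using map_zero by simp
next
  case (insert x B)
  then have "(\<Sum>v\<in>B. s1 (u v) v) \<in> S" "s1 (u x) x \<in> S"
    using lincomb_in v1.subspace_scale[OF subspace] by auto
  with insert show ?case by (simp add: map_add map_scale)
qed

lemma lincomb_image:
  assumes "B \<subseteq> S" "finite t" "t \<subseteq> f ` B"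
  obtains t0 where "t0 \<subseteq> B" "finite t0" "t = f ` t0"
    "(\<Sum>v\<in>t. s2 (u v) v) = f (\<Sum>a\<in>t0. s1 (u (f a)) a)"
proof -
  obtain t0 where t0: "t0 \<subseteq> B" "finite t0" "t = f ` t0"
    using finite_subset_image[OF assms(2,3)] by blast
  have "inj_on f t0" using inj t0(1) assms(1) by (meson inj_on_subset order_trans)
  then have "(\<Sum>v\<in>t. s2 (u v) v) = (\<Sum>a\<in>t0. s2 (u (f a)) (f a))"
    using t0(3) by (simp add: sum.reindex)
  also have "\<dots> = f (\<Sum>a\<in>t0. s1 (u (f a)) a)"
    using t0 assms(1) by (simp add: map_lincomb)
  finally show ?thesis using that t0 by blast
qed

lemma span_image:
  assumes B: "B \<subseteq> S"
  shows "v2.span (f ` B) = f ` v1.span B"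
proof
  show "v2.span (f ` B) \<subseteq> f ` v1.span B"
  proof
    fix y assume "y \<in> v2.span (f ` B)"
    then obtain t r where y: "y = (\<Sum>a\<in>t. s2 (r a) a)" and t: "finite t" "t \<subseteq> f ` B"
      unfolding v2.span_explicit by blast
    obtain t0 where t0: "t0 \<subseteq> B" "finite t0" and yf: "y = f (\<Sum>a\<in>t0. s1 (r (f a)) a)"
      using lincomb_image[OF B t] y by metis
    have "(\<Sum>a\<in>t0. s1 (r (f a)) a) \<in> v1.span B"
      using t0 by (intro v1.span_sum v1.span_scale v1.span_base) auto
    with yf show "y \<in> f ` v1.span B" by blast
  qed
next
  show "f ` v1.span B \<subseteq> v2.span (f ` B)"
  proof
    fix y assume "y \<in> f ` v1.span B"
    then obtain t r where y: "y = f (\<Sum>a\<in>t. s1 (r a) a)" and t: "finite t" "t \<subseteq> B"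
      unfolding v1.span_explicit by blast
    then have "y = (\<Sum>a\<in>t. s2 (r a) (f a))" using B by (simp add: map_lincomb)
    also have "\<dots> \<in> v2.span (f ` B)"
      using t by (intro v2.span_sum v2.span_scale v2.span_base) auto
    finally show "y \<in> v2.span (f ` B)" .
  qed
qed

lemma independent_image:
  assumes B: "B \<subseteq> S" and indep: "v1.independent B"
  shows "v2.independent (f ` B)"
  unfolding v2.independent_explicit_module
proof (intro allI impI)
  fix t u v assume t: "finite t" "t \<subseteq> f ` B" and zero: "(\<Sum>v\<in>t. s2 (u v) v) = 0" and v: "v \<in> t"
  obtain t0 where t0: "t0 \<subseteq> B" "finite t0" "t = f ` t0"
    and eq: "(\<Sum>v\<in>t. s2 (u v) v) = f (\<Sum>a\<in>t0. s1 (u (f a)) a)"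
    using lincomb_image[OF B t] by blast
  have "f (\<Sum>a\<in>t0. s1 (u (f a)) a) = f 0" using eq zero map_zero by simp
  then have "(\<Sum>a\<in>t0. s1 (u (f a)) a) = 0"
    using inj lincomb_in t0(1) B v1.subspace_0[OF subspace] by (meson inj_onD order_trans)
  moreover obtain a where "a \<in> t0" "v = f a" using v t0(3) by blast
  ultimately show "u v = 0" using v1.independentD[OF indep t0(2,1), of "\<lambda>a. u (f a)"] by simp
qed

lemma finitely_generated_iff:
  "(\<exists>B. finite B \<and> v1.span B = S) \<longleftrightarrow> (\<exists>B. finite B \<and> v2.span B = T)"
proof
  assume "\<exists>B. finite B \<and> v1.span B = S"
  then obtain B where B: "finite B" "v1.span B = S" by blast
  then have "v2.span (f ` B) = T" using span_image v1.span_superset image_eq by blast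
  with B show "\<exists>B. finite B \<and> v2.span B = T" by blast
next
  assume "\<exists>B. finite B \<and> v2.span B = T"
  then obtain B2 where B2: "finite B2" "v2.span B2 = T" by blast
  then have "B2 \<subseteq> f ` S" using v2.span_superset image_eq by blast
  then obtain B where B: "B \<subseteq> S" "finite B" "B2 = f ` B"
    using finite_subset_image[OF B2(1)] by blast
  have "f ` v1.span B = f ` S" using span_image[OF B(1)] B2 B image_eq by simp
  moreover have "v1.span B \<subseteq> S" using v1.span_minimal[OF B(1) subspace] .
  ultimately have "v1.span B = S" using inj by (simp add: inj_on_image_eq_iff)
  with B show "\<exists>B. finite B \<and> v1.span B = S" by blast
qed

lemma dim_eq: "v1.dim S = v2.dim T"
proof -
  obtain B where B: "B \<subseteq> S" "v1.independent B" "S \<subseteq> v1.span B" "card B = v1.dim S"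
    by (rule v1.basis_exists)
  then have "v1.span B = S" using v1.span_minimal[OF B(1) subspace] by blast
  then have "v2.span (f ` B) = T" using span_image[OF B(1)] image_eq by simp
  moreover have "card (f ` B) = v1.dim S" using B inj card_image inj_on_subset by metis
  moreover have "f ` B \<subseteq> T" using B image_eq by blast
  ultimately show ?thesis
    using v2.dim_unique[of "f ` B" T] independent_image[OF B(1,2)] by auto
qed

lemma kdim_eq: "kdim s1 S = kdim s2 T"
  unfolding kdim_def using finitely_generated_iff dim_eq by simp

end

lemma
  assumes "klin_cat sc Hom cmp idm"
  shows klin_cat_vector_space: "vector_space sc"
    and klin_cat_subspace: "module.subspace sc (Hom X Y)"
    and klin_cat_comp_closed: "f \<in> Hom X Y \<Longrightarrow> g \<in> Hom Y Z \<Longrightarrow> cmp X Y Z g f \<in> Hom X Z"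
    and klin_cat_id_closed: "idm X \<in> Hom X X"
    and klin_cat_id_left: "f \<in> Hom X Y \<Longrightarrow> cmp X Y Y (idm Y) f = f"
    and klin_cat_id_right: "f \<in> Hom X Y \<Longrightarrow> cmp X X Y f (idm X) = f"
    and klin_cat_assoc: "f \<in> Hom W X \<Longrightarrow> g \<in> Hom X Y \<Longrightarrow> h \<in> Hom Y Z \<Longrightarrow>
        cmp W Y Z h (cmp W X Y g f) = cmp W X Z (cmp X Y Z h g) f"
    and klin_cat_comp_add: "f1 \<in> Hom X Y \<Longrightarrow> f2 \<in> Hom X Y \<Longrightarrow> g \<in> Hom Y Z \<Longrightarrow>
        cmp X Y Z g (f1 + f2) = cmp X Y Z g f1 + cmp X Y Z g f2"
    and klin_cat_comp_scale: "f \<in> Hom X Y \<Longrightarrow> g \<in> Hom Y Z \<Longrightarrow>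
        cmp X Y Z g (sc c f) = sc c (cmp X Y Z g f)"
  using assms by (simp_all add: klin_cat_def)

lemma
  assumes "klin_functor sc1 Hom1 cmp1 id1 sc2 Hom2 cmp2 id2 Fo Fm"
  shows klin_functor_hom: "f \<in> Hom1 X Y \<Longrightarrow> Fm X Y f \<in> Hom2 (Fo X) (Fo Y)"
    and klin_functor_id: "Fm X X (id1 X) = id2 (Fo X)"
    and klin_functor_comp: "f \<in> Hom1 X Y \<Longrightarrow> g \<in> Hom1 Y Z \<Longrightarrow>
        Fm X Z (cmp1 X Y Z g f) = cmp2 (Fo X) (Fo Y) (Fo Z) (Fm Y Z g) (Fm X Y f)"
    and klin_functor_add: "f \<in> Hom1 X Y \<Longrightarrow> g \<in> Hom1 X Y \<Longrightarrow> Fm X Y (f + g) = Fm X Y f + Fm X Y g"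
    and klin_functor_scale: "f \<in> Hom1 X Y \<Longrightarrow> Fm X Y (sc1 c f) = sc2 c (Fm X Y f)"
  using assms unfolding klin_functor_def by blast+

definition isomorphic_obj ::
  "('o \<Rightarrow> 'o \<Rightarrow> 'm set) \<Rightarrow> ('o \<Rightarrow> 'o \<Rightarrow> 'o \<Rightarrow> 'm \<Rightarrow> 'm \<Rightarrow> 'm) \<Rightarrow> ('o \<Rightarrow> 'm) \<Rightarrow> 'o \<Rightarrow> 'o \<Rightarrow> bool" where
  "isomorphic_obj Hom cmp idm A B \<longleftrightarrow>
     (\<exists>\<eta>\<in>Hom A B. \<exists>\<theta>\<in>Hom B A. cmp A B A \<theta> \<eta> = idm A \<and> cmp B A B \<eta> \<theta> = idm B)"

lemma nat_iso_isomorphic_obj: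
  assumes "nat_iso Hom1 Hom2 cmp2 id2 Go Gm Ho Hm"
  shows "isomorphic_obj Hom2 cmp2 id2 (Go X) (Ho X)"
  using assms unfolding nat_iso_def isomorphic_obj_def by blast

lemma isomorphic_obj_refl:
  assumes "klin_cat sc Hom cmp idm"
  shows "isomorphic_obj Hom cmp idm A A"
  unfolding isomorphic_obj_def
  using klin_cat_id_closed[OF assms] klin_cat_id_left[OF assms klin_cat_id_closed[OF assms]] by blast

lemma isomorphic_obj_trans:
  assumes C: "klin_cat sc Hom cmp idm"
    and AB: "isomorphic_obj Hom cmp idm A B" and BD: "isomorphic_obj Hom cmp idm B D"
  shows "isomorphic_obj Hom cmp idm A D"
proof -
  from AB obtain \<eta> \<theta> where e: "\<eta> \<in> Hom A B" "\<theta> \<in> Hom B A"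
    "cmp A B A \<theta> \<eta> = idm A" "cmp B A B \<eta> \<theta> = idm B"
    unfolding isomorphic_obj_def by blast
  from BD obtain \<eta>' \<theta>' where e': "\<eta>' \<in> Hom B D" "\<theta>' \<in> Hom D B"
    "cmp B D B \<theta>' \<eta>' = idm B" "cmp D B D \<eta>' \<theta>' = idm D"
    unfolding isomorphic_obj_def by blast
  note closed = klin_cat_comp_closed[OF C] and assoc = klin_cat_assoc[OF C]
    and idr = klin_cat_id_right[OF C]
  have "cmp A D A (cmp D B A \<theta> \<theta>') (cmp A B D \<eta>' \<eta>) = cmp A B A (cmp B D A (cmp D B A \<theta> \<theta>') \<eta>') \<eta>"
    by (rule assoc[OF e(1) e'(1) closed[OF e'(2) e(2)]])
  also have "cmp B D A (cmp D B A \<theta> \<theta>') \<eta>' = cmp B B A \<theta> (cmp B D B \<theta>' \<eta>')"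
    by (rule assoc[OF e'(1) e'(2) e(2), symmetric])
  finally have inv_left: "cmp A D A (cmp D B A \<theta> \<theta>') (cmp A B D \<eta>' \<eta>) = idm A"
    using e e'(3) idr[OF e(2)] by simp
  have "cmp D A D (cmp A B D \<eta>' \<eta>) (cmp D B A \<theta> \<theta>') = cmp D B D (cmp B A D (cmp A B D \<eta>' \<eta>) \<theta>) \<theta>'"
    by (rule assoc[OF e'(2) e(2) closed[OF e(1) e'(1)]])
  also have "cmp B A D (cmp A B D \<eta>' \<eta>) \<theta> = cmp B B D \<eta>' (cmp B A B \<eta> \<theta>)"
    by (rule assoc[OF e(2) e(1) e'(1), symmetric])
  finally have inv_right: "cmp D A D (cmp A B D \<eta>' \<eta>) (cmp D B A \<theta> \<theta>') = idm D"
    using e' e(4) idr[OF e'(1)] by simp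
  show ?thesis unfolding isomorphic_obj_def
    by (intro bexI[of _ "cmp A B D \<eta>' \<eta>"] bexI[of _ "cmp D B A \<theta> \<theta>'"] conjI inv_left inv_right
        closed e e')
qed

lemma klin_functor_isomorphic_obj:
  assumes F: "klin_functor sc Hom cmp idm sc Hom cmp idm So Sm"
    and AB: "isomorphic_obj Hom cmp idm A B"
  shows "isomorphic_obj Hom cmp idm (So A) (So B)"
proof -
  from AB obtain \<eta> \<theta> where e: "\<eta> \<in> Hom A B" "\<theta> \<in> Hom B A"
    "cmp A B A \<theta> \<eta> = idm A" "cmp B A B \<eta> \<theta> = idm B"
    unfolding isomorphic_obj_def by blast
  show ?thesis unfolding isomorphic_obj_def
    using klin_functor_hom[OF F] klin_functor_id[OF F]
      klin_functor_comp[OF F e(1,2)] klin_functor_comp[OF F e(2,1)] e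
    by metis
qed

lemma isomorphic_obj_iterate:
  assumes C: "klin_cat sc Hom cmp idm"
    and T: "klin_functor sc Hom cmp idm sc Hom cmp idm To Tm"
    and FS_TF: "\<And>X. isomorphic_obj Hom cmp idm (Fo (So X)) (To (Fo X))"
  shows "isomorphic_obj Hom cmp idm (Fo ((So ^^ m) X)) ((To ^^ m) (Fo X))"
proof (induction m)
  case 0
  show ?case using isomorphic_obj_refl[OF C] by simp
next
  case (Suc m)
  show ?case
    using isomorphic_obj_trans[OF C FS_TF klin_functor_isomorphic_obj[OF T Suc.IH]] by simp
qed

lemma hdim_isomorphic_obj:
  assumes C: "klin_cat sc Hom cmp idm" and AB: "isomorphic_obj Hom cmp idm A B"
  shows "hdim sc Hom X A = hdim sc Hom X B"
proof -
  from AB obtain \<eta> \<theta> where e: "\<eta> \<in> Hom A B" "\<theta> \<in> Hom B A"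
    "cmp A B A \<theta> \<eta> = idm A" "cmp B A B \<eta> \<theta> = idm B"
    unfolding isomorphic_obj_def by blast
  note closed = klin_cat_comp_closed[OF C] and assoc = klin_cat_assoc[OF C]
    and idl = klin_cat_id_left[OF C]
  have "bij_betw (cmp X A B \<eta>) (Hom X A) (Hom X B)"
  proof (rule bij_betw_byWitness[where f' = "cmp X B A \<theta>"])
    show "\<forall>a\<in>Hom X A. cmp X B A \<theta> (cmp X A B \<eta> a) = a" using assoc[OF _ e(1) e(2)] e(3) idl by simp
    show "\<forall>a\<in>Hom X B. cmp X A B \<eta> (cmp X B A \<theta> a) = a" using assoc[OF _ e(2) e(1)] e(4) idl by simp
    show "cmp X A B \<eta> ` Hom X A \<subseteq> Hom X B" "cmp X B A \<theta> ` Hom X B \<subseteq> Hom X A"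
      using closed e(1,2) by blast+
  qed
  then have "linear_bij_on sc sc (cmp X A B \<eta>) (Hom X A) (Hom X B)"
    using klin_cat_vector_space[OF C] klin_cat_subspace[OF C]
      klin_cat_comp_add[OF C _ _ e(1)] klin_cat_comp_scale[OF C _ e(1)]
    by (simp add: linear_bij_on_def linear_bij_on_axioms_def)
  then interpret linear_bij_on sc sc "cmp X A B \<eta>" "Hom X A" "Hom X B" .
  show ?thesis unfolding hdim_def by (rule kdim_eq)
qed

lemma hdim_fully_faithful:
  assumes C1: "klin_cat sc1 Hom1 cmp1 id1" and C2: "klin_cat sc2 Hom2 cmp2 id2"
    and F: "klin_functor sc1 Hom1 cmp1 id1 sc2 Hom2 cmp2 id2 Fo Fm"
    and ff: "fully_faithful Hom1 Hom2 Fo Fm"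
  shows "hdim sc1 Hom1 X Y = hdim sc2 Hom2 (Fo X) (Fo Y)"
proof -
  have "linear_bij_on sc1 sc2 (Fm X Y) (Hom1 X Y) (Hom2 (Fo X) (Fo Y))"
    using klin_cat_vector_space[OF C1] klin_cat_vector_space[OF C2] klin_cat_subspace[OF C1]
      klin_functor_add[OF F] klin_functor_scale[OF F] ff
    by (simp add: linear_bij_on_def linear_bij_on_axioms_def fully_faithful_def)
  then interpret linear_bij_on sc1 sc2 "Fm X Y" "Hom1 X Y" "Hom2 (Fo X) (Fo Y)" .
  show ?thesis unfolding hdim_def by (rule kdim_eq)
qed

lemma nonzero_brick_fully_faithful:
  assumes C1: "klin_cat sc1 Hom1 cmp1 id1"
    and F: "klin_functor sc1 Hom1 cmp1 id1 sc2 Hom2 cmp2 id2 Fo Fm"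
    and ff: "fully_faithful Hom1 Hom2 Fo Fm"
    and brick: "nonzero_brick sc1 Hom1 id1 X"
  shows "nonzero_brick sc2 Hom2 id2 (Fo X)"
proof -
  have bij: "bij_betw (Fm X X) (Hom1 X X) (Hom2 (Fo X) (Fo X))"
    using ff unfolding fully_faithful_def by blast
  interpret v1: vector_space sc1 using klin_cat_vector_space[OF C1] .
  have zero: "0 \<in> Hom1 X X" using v1.subspace_0[OF klin_cat_subspace[OF C1]] .
  have id: "id1 X \<in> Hom1 X X" using klin_cat_id_closed[OF C1] .
  have "Fm X X 0 = 0" using klin_functor_add[OF F zero zero] by simp
  then have "id2 (Fo X) \<noteq> 0"
    using brick bij zero id klin_functor_id[OF F]
    unfolding nonzero_brick_def bij_betw_def by (metis inj_onD)
  moreover have "Hom2 (Fo X) (Fo X) = Fm X X ` range (\<lambda>c. sc1 c (id1 X))"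
    using bij brick unfolding bij_betw_def nonzero_brick_def by simp
  then have "Hom2 (Fo X) (Fo X) = range (\<lambda>c. sc2 c (id2 (Fo X)))"
    unfolding image_image using klin_functor_scale[OF F id] klin_functor_id[OF F] by simp
  ultimately show ?thesis unfolding nonzero_brick_def by simp
qed

lemma brick_set_fully_faithful_image:
  assumes C1: "klin_cat sc1 Hom1 cmp1 id1" and C2: "klin_cat sc2 Hom2 cmp2 id2"
    and F: "klin_functor sc1 Hom1 cmp1 id1 sc2 Hom2 cmp2 id2 Fo Fm"
    and ff: "fully_faithful Hom1 Hom2 Fo Fm"
    and B: "brick_set sc1 Hom1 id1 n \<phi>"
  shows "inj_on Fo \<phi>" and "brick_set sc2 Hom2 id2 n (Fo ` \<phi>)"
proof -
  note hd = hdim_fully_faithful[OF C1 C2 F ff]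
  have orth: "\<And>X Y. X \<in> \<phi> \<Longrightarrow> Y \<in> \<phi> \<Longrightarrow> hdim sc1 Hom1 X Y = (if X = Y then 1 else 0)"
    using B unfolding brick_set_def by blast
  show inj: "inj_on Fo \<phi>"
  proof (rule inj_onI, rule ccontr)
    fix X Y assume XY: "X \<in> \<phi>" "Y \<in> \<phi>" "Fo X = Fo Y" "X \<noteq> Y"
    then have "hdim sc1 Hom1 X Y = hdim sc1 Hom1 X X" using hd[of X Y] hd[of X X] by simp
    with orth[OF XY(1,2)] orth[OF XY(1,1)] XY(4) show False by simp
  qed
  show "brick_set sc2 Hom2 id2 n (Fo ` \<phi>)"
    unfolding brick_set_def
  proof (intro conjI ballI)
    show "finite (Fo ` \<phi>)" "card (Fo ` \<phi>) = n"
      using B inj card_image unfolding brick_set_def by auto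
    fix a b assume "a \<in> Fo ` \<phi>" "b \<in> Fo ` \<phi>"
    then obtain X Y where X: "X \<in> \<phi>" "a = Fo X" and Y: "Y \<in> \<phi>" "b = Fo Y" by blast
    show "nonzero_brick sc2 Hom2 id2 a"
      using nonzero_brick_fully_faithful[OF C1 F ff] B X unfolding brick_set_def by blast
    have "(a = b) = (X = Y)" using inj X Y by (auto dest: inj_onD)
    then show "hdim sc2 Hom2 a b = (if a = b then 1 else 0)"
      using orth[OF X(1) Y(1)] hd[of X Y] X Y by simp
  qed
qed

lemma fpdim_nonneg:
  assumes "n \<ge> 1"
  shows "0 \<le> fpdim sc Hom idm n So"
proof (cases "{\<phi>. brick_set sc Hom idm n \<phi>} = {}")
  case False
  then obtain \<psi> where \<psi>: "brick_set sc Hom idm n \<psi>" by blast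
  then have "finite \<psi>" "\<psi> \<noteq> {}" using assms unfolding brick_set_def by auto
  then have "0 \<le> spec_rad_inf \<psi> (adj_matrix sc Hom So)" by (rule spec_rad_inf_nonneg)
  also have "\<dots> \<le> (SUP \<phi> \<in> {\<phi>. brick_set sc Hom idm n \<phi>}. spec_rad_inf \<phi> (adj_matrix sc Hom So))"
    using \<psi> by (intro SUP_upper) simp
  finally show ?thesis unfolding fpdim_def using False by simp
qed (simp add: fpdim_def)

lemma fpdim_le_of_brick_set_embedding:
  assumes n: "n \<ge> 1"
    and embed: "\<And>\<phi>. brick_set sc1 Hom1 id1 n \<phi> \<Longrightarrow> inj_on h \<phi> \<and> brick_set sc2 Hom2 id2 n (h ` \<phi>)"
    and adj: "\<And>X Y. adj_matrix sc2 Hom2 S2 (h X) (h Y) = adj_matrix sc1 Hom1 S1 X Y"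
  shows "fpdim sc1 Hom1 id1 n S1 \<le> fpdim sc2 Hom2 id2 n S2"
proof (cases "{\<phi>. brick_set sc1 Hom1 id1 n \<phi>} = {}")
  case True
  then have "fpdim sc1 Hom1 id1 n S1 = 0" by (simp add: fpdim_def)
  with fpdim_nonneg[OF n] show ?thesis by simp
next
  case False
  then have ne2: "{\<phi>. brick_set sc2 Hom2 id2 n \<phi>} \<noteq> {}" using embed by blast
  have "spec_rad_inf \<phi> (adj_matrix sc1 Hom1 S1) \<le> fpdim sc2 Hom2 id2 n S2"
    if "brick_set sc1 Hom1 id1 n \<phi>" for \<phi>
  proof -
    from embed[OF that] have inj: "inj_on h \<phi>" and B: "brick_set sc2 Hom2 id2 n (h ` \<phi>)" by auto
    have "spec_rad_inf \<phi> (adj_matrix sc1 Hom1 S1) \<le> spec_rad_inf (h ` \<phi>) (adj_matrix sc2 Hom2 S2)"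
      using spec_rad_inf_reindex_le[OF inj] adj by blast
    also have "\<dots> \<le> (SUP \<psi> \<in> {\<psi>. brick_set sc2 Hom2 id2 n \<psi>}. spec_rad_inf \<psi> (adj_matrix sc2 Hom2 S2))"
      using B by (intro SUP_upper) simp
    also have "\<dots> = fpdim sc2 Hom2 id2 n S2"
      using ne2 by (simp only: fpdim_def if_False)
    finally show ?thesis .
  qed
  then have "(SUP \<phi> \<in> {\<phi>. brick_set sc1 Hom1 id1 n \<phi>}. spec_rad_inf \<phi> (adj_matrix sc1 Hom1 S1))
      \<le> fpdim sc2 Hom2 id2 n S2"
    by (intro SUP_least) simp
  then show ?thesis using False by (simp only: fpdim_def[of sc1] if_False)
qed

theorem theorem0p1:
  fixes sc1 :: "'k::field \<Rightarrow> 'm1::ab_group_add \<Rightarrow> 'm1"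
    and Hom1 :: "'o1 \<Rightarrow> 'o1 \<Rightarrow> 'm1 set"
    and cmp1 :: "'o1 \<Rightarrow> 'o1 \<Rightarrow> 'o1 \<Rightarrow> 'm1 \<Rightarrow> 'm1 \<Rightarrow> 'm1"
    and id1 :: "'o1 \<Rightarrow> 'm1"
    and sc2 :: "'k \<Rightarrow> 'm2::ab_group_add \<Rightarrow> 'm2"
    and Hom2 :: "'o2 \<Rightarrow> 'o2 \<Rightarrow> 'm2 set"
    and cmp2 :: "'o2 \<Rightarrow> 'o2 \<Rightarrow> 'o2 \<Rightarrow> 'm2 \<Rightarrow> 'm2 \<Rightarrow> 'm2"
    and id2 :: "'o2 \<Rightarrow> 'm2"
    and Fo :: "'o1 \<Rightarrow> 'o2" and Fm :: "'o1 \<Rightarrow> 'o1 \<Rightarrow> 'm1 \<Rightarrow> 'm2"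
    and SCo :: "'o1 \<Rightarrow> 'o1" and SCm :: "'o1 \<Rightarrow> 'o1 \<Rightarrow> 'm1 \<Rightarrow> 'm1"
    and SDo :: "'o2 \<Rightarrow> 'o2" and SDm :: "'o2 \<Rightarrow> 'o2 \<Rightarrow> 'm2 \<Rightarrow> 'm2"
  assumes "alg_closed TYPE('k)"
    and "klin_cat sc1 Hom1 cmp1 id1"
    and "klin_cat sc2 Hom2 cmp2 id2"
    and "klin_functor sc1 Hom1 cmp1 id1 sc2 Hom2 cmp2 id2 Fo Fm"
    and "fully_faithful Hom1 Hom2 Fo Fm"
    and "klin_functor sc1 Hom1 cmp1 id1 sc1 Hom1 cmp1 id1 SCo SCm"
    and "klin_functor sc2 Hom2 cmp2 id2 sc2 Hom2 cmp2 id2 SDo SDm"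
    and "nat_iso Hom1 Hom2 cmp2 id2
           (Fo \<circ> SCo) (\<lambda>X Y f. Fm (SCo X) (SCo Y) (SCm X Y f))
           (SDo \<circ> Fo) (\<lambda>X Y f. SDm (Fo X) (Fo Y) (Fm X Y f))"
  shows "\<forall>n\<ge>1. \<forall>m. fpdim sc1 Hom1 id1 n (SCo ^^ m) \<le> fpdim sc2 Hom2 id2 n (SDo ^^ m)"
proof (intro allI impI)
  fix n m :: nat
  assume n: "n \<ge> 1"
  note C1 = assms(2) and C2 = assms(3) and F = assms(4) and ff = assms(5) and SD = assms(7)
  have "isomorphic_obj Hom2 cmp2 id2 (Fo (SCo X)) (SDo (Fo X))" for X
    using nat_iso_isomorphic_obj[OF assms(8)] by simp
  then have iso: "isomorphic_obj Hom2 cmp2 id2 (Fo ((SCo ^^ m) Y)) ((SDo ^^ m) (Fo Y))" for Y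
    by (rule isomorphic_obj_iterate[OF C2 SD])
  have "adj_matrix sc2 Hom2 (SDo ^^ m) (Fo X) (Fo Y) = adj_matrix sc1 Hom1 (SCo ^^ m) X Y" for X Y
    unfolding adj_matrix_def hdim_fully_faithful[OF C1 C2 F ff]
    using hdim_isomorphic_obj[OF C2 iso] by simp
  then show "fpdim sc1 Hom1 id1 n (SCo ^^ m) \<le> fpdim sc2 Hom2 id2 n (SDo ^^ m)"
    using fpdim_le_of_brick_set_embedding[OF n] brick_set_fully_faithful_image[OF C1 C2 F ff]
    by blast
qed

end
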